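(* Let $\{a_n\}_{n\ge1}$ be a sequence of positive real numbers. Suppose there are positive real numbers $r_1,r_2$ such that for all sufficiently large $n$ \[ \frac{a_{2n}}{a_n}<\frac{1}{2+r_1}\quad\text{and}\quad\frac{a_{2n+1}}{a_n}<\frac{1}{2+r_2}. \] Then $\sum_{n=1}^\infty a_n$ converges. *)

theory Defs
  imports Complex_Main
begin

end

theory Submission
  imports Defs
begin

(* With q = 2 max (1/(2+r1), 1/(2+r2)) < 1 the hypotheses give a(2n) + a(2n+1) <= q a(n) for
   all large n, say n >= N. Summing this over N <= n < M, the partial sums T(M) = sum_{n<M} a(n)
   satisfy T(2M) <= T(2N) + q T(M) <= T(2N) + q T(2M), so they are bounded by T(2N) / (1 - q). *)

lemma sum_atLeastLessThan_double:
  fixes f :: "nat \<Rightarrow> 'a::comm_monoid_add"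
  assumes "m \<le> n"
  shows "sum f {2*m..<2*n} = (\<Sum>k=m..<n. f (2*k) + f (2*k+1))"
  using assms
proof (induction n rule: dec_induct)
  case base
  then show ?case by simp
next
  case (step n)
  have "sum f {2*m..<2*Suc n} = sum f {2*m..<2*n} + (f (2*n) + f (2*n+1))"
    using step.hyps by (simp add: sum.atLeastLessThan_Suc add.assoc)
  with step.IH step.hyps show ?case by (simp add: sum.atLeastLessThan_Suc)
qed

lemma summable_dyadic_contraction:
  fixes f :: "nat \<Rightarrow> real"
  assumes nonneg: "\<And>n. 0 \<le> f n"
    and q: "0 \<le> q" "q < 1"
    and contr: "\<And>n. n \<ge> N \<Longrightarrow> f (2*n) + f (2*n+1) \<le> q * f n"
  shows "summable f"
proof -
  define T where "T M = (\<Sum>n<M. f n)" for M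
  have T_mono: "T m \<le> T M" if "m \<le> M" for m M
    unfolding T_def using that nonneg by (intro sum_mono2) auto
  have T_double: "T (2*M) \<le> T (2*N) / (1 - q)" if "N \<le> M" for M
  proof -
    have "sum f {2*N..<2*M} = (\<Sum>n=N..<M. f (2*n) + f (2*n+1))"
      using that by (rule sum_atLeastLessThan_double)
    also have "\<dots> \<le> (\<Sum>n=N..<M. q * f n)"
      by (intro sum_mono contr) simp
    also have "\<dots> \<le> q * T M"
      unfolding T_def sum_distrib_left[symmetric] using q nonneg
      by (intro mult_left_mono sum_mono2) auto
    also have "\<dots> \<le> q * T (2*M)"
      using q by (intro mult_left_mono T_mono) auto
    moreover have "T (2*M) = T (2*N) + sum f {2*N..<2*M}"
      unfolding T_def lessThan_atLeast0 using that by (simp add: sum.atLeastLessThan_concat)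
    ultimately have "T (2*M) \<le> T (2*N) + q * T (2*M)"
      by linarith
    with q show ?thesis by (simp add: field_simps)
  qed
  show ?thesis
  proof (rule summableI_nonneg_bounded[OF nonneg])
    fix m
    have "T m \<le> T (2*(m+N))" by (rule T_mono) simp
    also have "\<dots> \<le> T (2*N) / (1 - q)" by (rule T_double) simp
    finally show "(\<Sum>n<m. f n) \<le> T (2*N) / (1 - q)" unfolding T_def .
  qed
qed

lemma summable_eventually_dyadic_contraction:
  fixes f :: "nat \<Rightarrow> real"
  assumes "\<forall>\<^sub>F n in sequentially. 0 \<le> f n \<and> f (2*n) + f (2*n+1) \<le> q * f n"
    and "0 \<le> q" "q < 1"
  shows "summable f"
proof -
  obtain N where N: "\<And>n. n \<ge> N \<Longrightarrow> 0 \<le> f n \<and> f (2*n) + f (2*n+1) \<le> q * f n"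
    using assms(1) unfolding eventually_sequentially by blast
  define g where "g n = (if N \<le> n then f n else 0)" for n
  have "summable g"
  proof (rule summable_dyadic_contraction[of g q N])
    show "0 \<le> g n" for n
      using N by (simp add: g_def)
    show "g (2*n) + g (2*n+1) \<le> q * g n" if "N \<le> n" for n
      using N[OF that] that by (simp add: g_def)
  qed (use assms in auto)
  moreover have "\<forall>\<^sub>F n in sequentially. f n = g n"
    unfolding eventually_sequentially g_def by auto
  ultimately show ?thesis
    using summable_cong by blast
qed

theorem corollary2p1p3:
  fixes a :: "nat \<Rightarrow> real" and r1 r2 :: real
  assumes pos: "\<And>n. n \<ge> 1 \<Longrightarrow> a n > 0"
    and r1: "r1 > 0" and r2: "r2 > 0"
    and ev: "\<forall>\<^sub>F n in sequentially.
               a (2 * n) / a n < 1 / (2 + r1) \<and> a (2 * n + 1) / a n < 1 / (2 + r2)"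
  shows "summable (\<lambda>n. a (Suc n))"
proof -
  define c where "c = max (1 / (2 + r1)) (1 / (2 + r2))"
  have c_nonneg: "0 \<le> c"
    using r1 by (simp add: c_def le_max_iff_disj)
  have c_small: "2 * c < 1"
    using r1 r2 by (simp add: c_def max_def field_simps)
  have "\<forall>\<^sub>F n in sequentially. 0 \<le> a n \<and> a (2*n) + a (2*n+1) \<le> 2 * c * a n"
    using ev eventually_ge_at_top[of 1]
  proof eventually_elim
    case (elim n)
    then have "a n > 0" using pos by blast
    have "a (2*n) / a n \<le> c" "a (2*n+1) / a n \<le> c"
      using elim unfolding c_def by linarith+
    with \<open>a n > 0\<close> have "a (2*n) \<le> c * a n" "a (2*n+1) \<le> c * a n"
      by (simp_all add: pos_divide_le_eq)
    with \<open>a n > 0\<close> show ?case by simp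
  qed
  then have "summable a"
    by (rule summable_eventually_dyadic_contraction) (use c_nonneg c_small in auto)
  then show ?thesis
    by (simp add: summable_Suc_iff)
qed

end
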